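(* Let $K$ be a compact Hausdorff space and $K'$ its Cantor--Bendixson derivative. If $K'$ has the extension property and $K'$ admits an extension operator in $K$, then $K$ has the extension property.
   Context: $K'$ denotes the set of non-isolated points of $K$. $C(K)$ is the Banach space of real-valued continuous functions on $K$ with the supremum norm. For a closed $F\subseteq K$, an extension operator for $F$ in $K$ is a bounded linear map $E:C(F)\to C(K)$ with $E(f)|_F=f$ for all $f\in C(F)$. A compact space has the extension property if every nonempty closed subset admits an extension operator in it. *)

theory Defs
  imports "HOL-Analysis.Analysis"
begin

text \<open>C(F) for a closed F of the space X is represented by real functions on the
carrier that are continuous on the subspace F (values outside F are irrelevant).\<close>

definition extension_operator ::
  "'a topology \<Rightarrow> 'a set \<Rightarrow> (('a \<Rightarrow> real) \<Rightarrow> ('a \<Rightarrow> real)) \<Rightarrow> bool" where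
  "extension_operator X F E \<longleftrightarrow>
     (\<forall>f. continuous_map (subtopology X F) euclideanreal f \<longrightarrow>
          continuous_map X euclideanreal (E f)) \<and>
     (\<forall>f. continuous_map (subtopology X F) euclideanreal f \<longrightarrow>
          (\<forall>x\<in>F. E f x = f x)) \<and>
     (\<forall>f g a b. continuous_map (subtopology X F) euclideanreal f \<and>
                continuous_map (subtopology X F) euclideanreal g \<longrightarrow>
          (\<forall>x\<in>topspace X. E (\<lambda>y. a * f y + b * g y) x = a * E f x + b * E g x)) \<and>
     (\<exists>M. \<forall>f B. continuous_map (subtopology X F) euclideanreal f \<and> (\<forall>y\<in>F. \<bar>f y\<bar> \<le> B) \<longrightarrow>
          (\<forall>x\<in>topspace X. \<bar>E f x\<bar> \<le> M * B))"

definition admits_extension_operator :: "'a topology \<Rightarrow> 'a set \<Rightarrow> bool" where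
  "admits_extension_operator X F \<longleftrightarrow> (\<exists>E. extension_operator X F E)"

definition extension_property :: "'a topology \<Rightarrow> bool" where
  "extension_property X \<longleftrightarrow>
     (\<forall>F. closedin X F \<and> F \<noteq> {} \<longrightarrow> admits_extension_operator X F)"

end

theory Submission
  imports Defs
begin

text \<open>Given a nonempty closed set \<open>F\<close>, extend from \<open>F \<inter> K'\<close> to \<open>K'\<close> by the extension
property of \<open>K'\<close>, then from \<open>K'\<close> to \<open>K\<close> by the given operator, and finally overwrite the
result by \<open>f\<close> itself on \<open>F\<close>. The two pieces agree on the non-isolated points of \<open>F\<close>, while
continuity at isolated points is automatic, so the pasted function is continuous; boundedness
and linearity are inherited.\<close>

lemma frontier_of_subset_derived_set_of_topspace:
  "X frontier_of S \<subseteq> X derived_set_of topspace X"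
proof
  fix x assume "x \<in> X frontier_of S"
  then have "x \<in> X closure_of (topspace X \<inter> S)" "x \<in> X closure_of (topspace X - S)"
    by (simp_all add: frontier_of_closures flip: closure_of_restrict)
  then have "x \<in> X derived_set_of (topspace X \<inter> S) \<or> x \<in> X derived_set_of (topspace X - S)"
    by (auto simp: closure_of_alt)
  then show "x \<in> X derived_set_of topspace X"
    by (meson Diff_subset inf_le1 derived_set_of_mono subsetD)
qed

lemma continuous_map_cases_derived:
  assumes "closedin X F"
    and f: "continuous_map (subtopology X F) euclideanreal f"
    and g: "continuous_map X euclideanreal g"
    and fg: "\<And>x. x \<in> F \<inter> X derived_set_of topspace X \<Longrightarrow> f x = g x"
  shows "continuous_map X euclideanreal (\<lambda>x. if x \<in> F then f x else g x)"
proof (rule continuous_map_cases[where P = "\<lambda>x. x \<in> F"])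
  show "continuous_map (subtopology X (X closure_of {x. x \<in> F})) euclideanreal f"
    using f assms(1) by (simp add: closure_of_closedin)
  show "continuous_map (subtopology X (X closure_of {x. x \<notin> F})) euclideanreal g"
    using g continuous_map_from_subtopology by blast
  fix x assume x: "x \<in> X frontier_of {x. x \<in> F}"
  then have "x \<in> F"
    using frontier_of_subset_closedin[OF assms(1)] by auto
  moreover have "x \<in> X derived_set_of topspace X"
    using frontier_of_subset_derived_set_of_topspace x ..
  ultimately show "f x = g x"
    by (simp add: fg)
qed

lemma extension_operatorI:
  assumes "\<And>f. continuous_map (subtopology X F) euclideanreal f \<Longrightarrow>
             continuous_map X euclideanreal (E f)"
    and "\<And>f x. continuous_map (subtopology X F) euclideanreal f \<Longrightarrow> x \<in> F \<Longrightarrow> E f x = f x"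
    and "\<And>f g a b x. continuous_map (subtopology X F) euclideanreal f \<Longrightarrow>
             continuous_map (subtopology X F) euclideanreal g \<Longrightarrow> x \<in> topspace X \<Longrightarrow>
             E (\<lambda>y. a * f y + b * g y) x = a * E f x + b * E g x"
    and "\<And>f B x. continuous_map (subtopology X F) euclideanreal f \<Longrightarrow> (\<forall>y\<in>F. \<bar>f y\<bar> \<le> B) \<Longrightarrow>
             x \<in> topspace X \<Longrightarrow> \<bar>E f x\<bar> \<le> M * B"
  shows "extension_operator X F E"
  unfolding extension_operator_def using assms by (intro conjI allI impI ballI exI[of _ M]) auto

context
  fixes X :: "'a topology" and F :: "'a set" and E :: "('a \<Rightarrow> real) \<Rightarrow> 'a \<Rightarrow> real"
  assumes E: "extension_operator X F E"
begin

lemma extension_operator_continuous: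
  "continuous_map (subtopology X F) euclideanreal f \<Longrightarrow> continuous_map X euclideanreal (E f)"
  using E unfolding extension_operator_def by simp

lemma extension_operator_extends:
  "continuous_map (subtopology X F) euclideanreal f \<Longrightarrow> x \<in> F \<Longrightarrow> E f x = f x"
  using E unfolding extension_operator_def by simp

lemma extension_operator_linear:
  "continuous_map (subtopology X F) euclideanreal f \<Longrightarrow>
   continuous_map (subtopology X F) euclideanreal g \<Longrightarrow> x \<in> topspace X \<Longrightarrow>
   E (\<lambda>y. a * f y + b * g y) x = a * E f x + b * E g x"
  using E unfolding extension_operator_def by simp

lemma extension_operator_bounded:
  obtains M where "\<And>f B x. continuous_map (subtopology X F) euclideanreal f \<Longrightarrow>
    (\<forall>y\<in>F. \<bar>f y\<bar> \<le> B) \<Longrightarrow> x \<in> topspace X \<Longrightarrow> \<bar>E f x\<bar> \<le> M * B"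
  using E unfolding extension_operator_def by metis
end

lemma extension_operator_empty: "extension_operator X {} (\<lambda>f x. 0)"
  by (rule extension_operatorI[where M = 0]) auto

lemma extension_property_admits_closedin:
  assumes "extension_property X" "closedin X F"
  shows "admits_extension_operator X F"
  using assms extension_operator_empty
  unfolding extension_property_def admits_extension_operator_def by (cases "F = {}") auto

text \<open>The zero extension outside \<open>K\<close> makes the intermediate functions depend linearly on \<open>f\<close>
everywhere, not only on \<open>K\<close>; this is what the linearity of \<open>E0\<close> requires.\<close>

lemma extension_operator_compose:
  assumes E0: "extension_operator X K E0"
    and E1: "extension_operator (subtopology X K) G E1"
    and "G \<subseteq> K" "K \<subseteq> topspace X"
  shows "extension_operator X G (\<lambda>f. E0 (\<lambda>x. if x \<in> K then E1 f x else 0))"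
proof -
  define E1' where "E1' f x = (if x \<in> K then E1 f x else 0)" for f x
  have sub: "subtopology (subtopology X K) G = subtopology X G"
    using \<open>G \<subseteq> K\<close> by (simp add: subtopology_subtopology Int_absorb1)
  have topK: "topspace (subtopology X K) = K"
    using \<open>K \<subseteq> topspace X\<close> by auto
  note E1_continuous = extension_operator_continuous[OF E1, unfolded sub]
  note E1_extends = extension_operator_extends[OF E1, unfolded sub]
  note E1_linear = extension_operator_linear[OF E1, unfolded sub topK]
  have cont1: "continuous_map (subtopology X K) euclideanreal (E1' f)"
    if "continuous_map (subtopology X G) euclideanreal f" for f
    by (rule continuous_map_eq[OF E1_continuous[OF that]]) (simp add: E1'_def topK)
  have lin1: "E1' (\<lambda>y. a * f y + b * g y) = (\<lambda>y. a * E1' f y + b * E1' g y)"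
    if "continuous_map (subtopology X G) euclideanreal f"
       "continuous_map (subtopology X G) euclideanreal g" for f g a b
    using E1_linear[OF that] topK by (auto simp: E1'_def)
  obtain M0 where M0: "\<And>f B x. continuous_map (subtopology X K) euclideanreal f \<Longrightarrow>
    (\<forall>y\<in>K. \<bar>f y\<bar> \<le> B) \<Longrightarrow> x \<in> topspace X \<Longrightarrow> \<bar>E0 f x\<bar> \<le> M0 * B"
    using extension_operator_bounded[OF E0] by blast
  obtain M1 where M1: "\<And>f B x. continuous_map (subtopology X G) euclideanreal f \<Longrightarrow>
    (\<forall>y\<in>G. \<bar>f y\<bar> \<le> B) \<Longrightarrow> x \<in> K \<Longrightarrow> \<bar>E1 f x\<bar> \<le> M1 * B"
    using extension_operator_bounded[OF E1] unfolding sub topK by metis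
  have "extension_operator X G (\<lambda>f. E0 (E1' f))"
  proof (rule extension_operatorI[where M = "M0 * M1"])
    fix f assume f: "continuous_map (subtopology X G) euclideanreal f"
    show "continuous_map X euclideanreal (E0 (E1' f))"
      by (rule extension_operator_continuous[OF E0 cont1[OF f]])
    fix x assume "x \<in> G"
    with \<open>G \<subseteq> K\<close> show "E0 (E1' f) x = f x"
      using extension_operator_extends[OF E0 cont1[OF f]] E1_extends[OF f]
      by (auto simp: E1'_def)
  next
    fix f g a b x
    assume f: "continuous_map (subtopology X G) euclideanreal f"
      and g: "continuous_map (subtopology X G) euclideanreal g" and "x \<in> topspace X"
    then show "E0 (E1' (\<lambda>y. a * f y + b * g y)) x = a * E0 (E1' f) x + b * E0 (E1' g) x"
      using extension_operator_linear[OF E0 cont1[OF f] cont1[OF g]] by (simp add: lin1)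
  next
    fix f B x
    assume f: "continuous_map (subtopology X G) euclideanreal f"
      and "\<forall>y\<in>G. \<bar>f y\<bar> \<le> B" and "x \<in> topspace X"
    then have "\<forall>y\<in>K. \<bar>E1' f y\<bar> \<le> M1 * B"
      using M1 by (simp add: E1'_def)
    then show "\<bar>E0 (E1' f) x\<bar> \<le> M0 * M1 * B"
      using M0[OF cont1[OF f]] \<open>x \<in> topspace X\<close> by (simp add: mult.assoc)
  qed
  then show ?thesis
    unfolding E1'_def[abs_def] .
qed

lemma extension_operator_from_derived:
  assumes F: "closedin X F" "F \<noteq> {}"
    and G: "F \<inter> X derived_set_of topspace X \<subseteq> G" "G \<subseteq> F"
    and E: "extension_operator X G E"
  shows "extension_operator X F (\<lambda>f x. if x \<in> F then f x else E f x)"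
proof -
  have restrict: "continuous_map (subtopology X G) euclideanreal f"
    if "continuous_map (subtopology X F) euclideanreal f" for f
    using continuous_map_from_subtopology_mono[OF that \<open>G \<subseteq> F\<close>] .
  obtain M where M: "\<And>f B x. continuous_map (subtopology X G) euclideanreal f \<Longrightarrow>
    (\<forall>y\<in>G. \<bar>f y\<bar> \<le> B) \<Longrightarrow> x \<in> topspace X \<Longrightarrow> \<bar>E f x\<bar> \<le> M * B"
    using extension_operator_bounded[OF E] by blast
  show ?thesis
  proof (rule extension_operatorI[where M = "max 1 M"])
    fix f assume f: "continuous_map (subtopology X F) euclideanreal f"
    show "continuous_map X euclideanreal (\<lambda>x. if x \<in> F then f x else E f x)"
    proof (rule continuous_map_cases_derived[OF F(1) f])
      show "continuous_map X euclideanreal (E f)"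
        by (rule extension_operator_continuous[OF E restrict[OF f]])
      show "f x = E f x" if "x \<in> F \<inter> X derived_set_of topspace X" for x
        using extension_operator_extends[OF E restrict[OF f]] that G(1) by auto
    qed
  next
    fix f g a b x
    assume "continuous_map (subtopology X F) euclideanreal f"
      "continuous_map (subtopology X F) euclideanreal g" "x \<in> topspace X"
    then show "(if x \<in> F then a * f x + b * g x else E (\<lambda>y. a * f y + b * g y) x) =
      a * (if x \<in> F then f x else E f x) + b * (if x \<in> F then g x else E g x)"
      using extension_operator_linear[OF E restrict restrict] by simp
  next
    fix f B x
    assume f: "continuous_map (subtopology X F) euclideanreal f"
      and bound: "\<forall>y\<in>F. \<bar>f y\<bar> \<le> B" and "x \<in> topspace X"
    have "B \<ge> 0"
      using bound \<open>F \<noteq> {}\<close> by (meson abs_ge_zero all_not_in_conv order_trans)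
    have scale: "c * B \<le> max 1 M * B" if "c \<le> max 1 M" for c
      using mult_right_mono[OF that \<open>B \<ge> 0\<close>] .
    show "\<bar>if x \<in> F then f x else E f x\<bar> \<le> max 1 M * B"
    proof (cases "x \<in> F")
      case True
      have "\<bar>f x\<bar> \<le> 1 * B"
        using bound True by simp
      also have "\<dots> \<le> max 1 M * B"
        by (rule scale) simp
      finally show ?thesis
        using True by simp
    next
      case False
      have "\<bar>E f x\<bar> \<le> M * B"
        using M[OF restrict[OF f]] bound \<open>G \<subseteq> F\<close> \<open>x \<in> topspace X\<close> by blast
      also have "\<dots> \<le> max 1 M * B"
        by (rule scale) simp
      finally show ?thesis
        using False by simp
    qed
  qed simp
qed

theorem proposition3p8:
  fixes X :: "'a topology"
  assumes "compact_space X" and "Hausdorff_space X"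
    and "extension_property (subtopology X (X derived_set_of topspace X))"
    and "admits_extension_operator X (X derived_set_of topspace X)"
  shows "extension_property X"
  unfolding extension_property_def
proof (intro allI impI, elim conjE)
  fix F assume F: "closedin X F" "F \<noteq> {}"
  let ?K = "X derived_set_of topspace X"
  have "closedin (subtopology X ?K) (F \<inter> ?K)"
    using closedin_subtopology_Int_closed[OF F(1), of ?K] by (simp only: Int_commute)
  then have "admits_extension_operator (subtopology X ?K) (F \<inter> ?K)"
    by (rule extension_property_admits_closedin[OF assms(3)])
  then obtain E1 where E1: "extension_operator (subtopology X ?K) (F \<inter> ?K) E1"
    unfolding admits_extension_operator_def by blast
  obtain E0 where E0: "extension_operator X ?K E0"
    using assms(4) unfolding admits_extension_operator_def by blast
  have "extension_operator X (F \<inter> ?K) (\<lambda>f. E0 (\<lambda>x. if x \<in> ?K then E1 f x else 0))"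
    by (rule extension_operator_compose[OF E0 E1]) (simp_all add: derived_set_of_subset_topspace)
  then have "extension_operator X F
      (\<lambda>f x. if x \<in> F then f x else E0 (\<lambda>x. if x \<in> ?K then E1 f x else 0) x)"
    by (rule extension_operator_from_derived[OF F, rotated 2]) auto
  then show "admits_extension_operator X F"
    unfolding admits_extension_operator_def by blast
qed

end
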